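(* For $k=2$ the following equivalences hold in $\{m_1,m_2,m_3\}^*$: $m_1m_3\sim m_3m_1$, $m_1m_2m_2m_3\sim m_2m_3m_1m_2$, $m_1m_2m_3m_2\sim m_2m_1m_2m_3$, $m_1m_1m_2m_2m_2m_3\sim m_2m_3m_1m_1m_2m_2$, and $m_1m_2m_2m_2m_3m_3\sim m_2m_2m_3m_3m_1m_2$. Moreover, $m_1m_2m_2m_2m_3m_3\sim m_2m_2m_3m_3m_1m_2$ cannot be derived from the first three equivalences, i.e. these two words are not related by the smallest congruence containing the first three pairs.
   Context: A system of $2$ stacks in series consists of an input queue, stack 1, stack 2, and an output queue. A state records the contents of each stack and each queue (finitely many distinct labelled elements); there is one additional "illegal" state $\varnothing$. Moves: $m_1$ moves the front of the input queue onto stack 1; $m_2$ pops stack 1 and pushes onto stack 2; $m_3$ pops stack 2 and enqueues at the back of the output queue. For a word $w$ and state $s$, $w\ast s$ is obtained by applying the moves left to right, with $w\ast s=\varnothing$ if some move is illegal and $w\ast\varnothing=\varnothing$. For words $x,y$, $x\sim y$ iff $x\ast s=y\ast s$ for every state $s$ (including $\varnothing$). *)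

theory Defs
  imports Main
begin

datatype move = M1 | M2 | M3

text \<open>A legal state: (input queue, stack 1, stack 2, output queue), all lists of
labelled elements. Input queue: front = head. Stacks: top = head. The illegal state is None.\<close>
type_synonym 'a state = "('a list \<times> 'a list \<times> 'a list \<times> 'a list) option"

fun step :: "move \<Rightarrow> 'a state \<Rightarrow> 'a state" where
  "step M1 (Some (x # inp, s1, s2, out)) = Some (inp, x # s1, s2, out)"
| "step M2 (Some (inp, x # s1, s2, out)) = Some (inp, s1, x # s2, out)"
| "step M3 (Some (inp, s1, x # s2, out)) = Some (inp, s1, s2, out @ [x])"
| "step _ _ = None"

definition act :: "move list \<Rightarrow> 'a state \<Rightarrow> 'a state" where
  "act w s = fold step w s"

definition valid_state :: "nat state \<Rightarrow> bool" where
  "valid_state s = (case s of None \<Rightarrow> True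
     | Some (inp, s1, s2, out) \<Rightarrow> distinct (inp @ s1 @ s2 @ out))"

definition move_equiv :: "move list \<Rightarrow> move list \<Rightarrow> bool" (infix "\<approx>" 50) where
  "x \<approx> y \<longleftrightarrow> (\<forall>s. valid_state s \<longrightarrow> act x s = act y s)"

inductive cong_closure :: "(move list \<times> move list) set \<Rightarrow> move list \<Rightarrow> move list \<Rightarrow> bool"
  for R where
  base: "(x, y) \<in> R \<Longrightarrow> cong_closure R x y"
| refl: "cong_closure R x x"
| sym: "cong_closure R x y \<Longrightarrow> cong_closure R y x"
| trans: "cong_closure R x y \<Longrightarrow> cong_closure R y z \<Longrightarrow> cong_closure R x z"
| ctxt: "cong_closure R x y \<Longrightarrow> cong_closure R (u @ x @ v) (u @ y @ v)"

end

theory Submission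
  imports Defs "HOL-Library.Sublist"
begin

(* The five equivalences are finite checks: a word of length at most six only
   inspects the first few entries of the input queue and of the two stacks, so
   after case analysis on those list prefixes both sides of each equation
   evaluate to the same state (or both to the illegal state).

   The non-derivability claim rests on a general fact about congruence
   closures: if no side of any defining relation occurs as a factor
   (contiguous subword) of a word w, then the congruence class of w is {w}.
   Indeed, the relation "x ~ y implies y = x whenever x is a factor of w" is
   preserved by every closure rule.  The word m1 m2 m2 m2 m3 m3 contains none
   of m1m3, m3m1, m1m2m2m3, m2m3m1m2, m1m2m3m2, m2m1m2m3 as a factor, so it is
   congruent only to itself, in particular not to m2 m2 m3 m3 m1 m2. *)

text \<open>Each move rewritten as a case distinction on the state; this lets the
  simplifier split on the shape of the lists touched by a word.\<close>

lemma step_cases: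
  "step M1 s = (case s of Some (x # inp, s1, s2, out) \<Rightarrow> Some (inp, x # s1, s2, out) | _ \<Rightarrow> None)"
  "step M2 s = (case s of Some (inp, x # s1, s2, out) \<Rightarrow> Some (inp, s1, x # s2, out) | _ \<Rightarrow> None)"
  "step M3 s = (case s of Some (inp, s1, x # s2, out) \<Rightarrow> Some (inp, s1, s2, out @ [x]) | _ \<Rightarrow> None)"
  by (cases s; auto split: list.splits)+

lemma move_equivI: "(\<And>s :: nat state. act x s = act y s) \<Longrightarrow> x \<approx> y"
  by (simp add: move_equiv_def)

lemmas act_unfold = act_def step_cases

lemma equiv_1: "[M1, M3] \<approx> [M3, M1]"
  by (rule move_equivI) (auto simp: act_unfold split: option.splits list.splits)

lemma equiv_2: "[M1, M2, M2, M3] \<approx> [M2, M3, M1, M2]"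
  by (rule move_equivI) (auto simp: act_unfold split: option.splits list.splits)

lemma equiv_3: "[M1, M2, M3, M2] \<approx> [M2, M1, M2, M3]"
  by (rule move_equivI) (auto simp: act_unfold split: option.splits list.splits)

lemma equiv_4: "[M1, M1, M2, M2, M2, M3] \<approx> [M2, M3, M1, M1, M2, M2]"
  by (rule move_equivI) (auto simp: act_unfold split: option.splits list.splits)

lemma equiv_5: "[M1, M2, M2, M2, M3, M3] \<approx> [M2, M2, M3, M3, M1, M2]"
  by (rule move_equivI) (auto simp: act_unfold split: option.splits list.splits)

definition isolated :: "(move list \<times> move list) set \<Rightarrow> move list \<Rightarrow> bool" where
  "isolated R w \<longleftrightarrow> (\<forall>(l, r) \<in> R. \<not> sublist l w \<and> \<not> sublist r w)"

lemma cong_closure_factor_fixed: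
  assumes "cong_closure R x y" and "isolated R w"
  shows "(sublist x w \<longrightarrow> y = x) \<and> (sublist y w \<longrightarrow> x = y)"
  using assms
proof (induction rule: cong_closure.induct)
  case (base x y)
  then show ?case by (auto simp: isolated_def)
next
  case (refl x)
  then show ?case by simp
next
  case (sym x y)
  then show ?case by blast
next
  case (trans x y z)
  then show ?case by blast
next
  case (ctxt x y u v)
  then have IH: "(sublist x w \<longrightarrow> y = x) \<and> (sublist y w \<longrightarrow> x = y)" by blast
  have "sublist x (u @ x @ v)" "sublist y (u @ y @ v)" by (rule sublist_appendI)+
  then have "sublist (u @ x @ v) w \<Longrightarrow> sublist x w" "sublist (u @ y @ v) w \<Longrightarrow> sublist y w"
    using sublist_order.order_trans by blast+
  with IH show ?case by blast
qed

lemma cong_closure_isolated: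
  assumes "isolated R w" and "cong_closure R w y"
  shows "y = w"
  using cong_closure_factor_fixed[OF assms(2,1)] by simp

lemma isolated_w:
  "isolated {([M1, M3], [M3, M1]),
             ([M1, M2, M2, M3], [M2, M3, M1, M2]),
             ([M1, M2, M3, M2], [M2, M1, M2, M3])}
            [M1, M2, M2, M2, M3, M3]"
  by (simp add: isolated_def sublist_code)

theorem mainTheorem9:
  shows "[M1, M3] \<approx> [M3, M1]
    \<and> [M1, M2, M2, M3] \<approx> [M2, M3, M1, M2]
    \<and> [M1, M2, M3, M2] \<approx> [M2, M1, M2, M3]
    \<and> [M1, M1, M2, M2, M2, M3] \<approx> [M2, M3, M1, M1, M2, M2]
    \<and> [M1, M2, M2, M2, M3, M3] \<approx> [M2, M2, M3, M3, M1, M2]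
    \<and> \<not> cong_closure {([M1, M3], [M3, M1]),
                        ([M1, M2, M2, M3], [M2, M3, M1, M2]),
                        ([M1, M2, M3, M2], [M2, M1, M2, M3])}
          [M1, M2, M2, M2, M3, M3] [M2, M2, M3, M3, M1, M2]"
proof -
  have "\<not> cong_closure {([M1, M3], [M3, M1]),
                        ([M1, M2, M2, M3], [M2, M3, M1, M2]),
                        ([M1, M2, M3, M2], [M2, M1, M2, M3])}
          [M1, M2, M2, M2, M3, M3] [M2, M2, M3, M3, M1, M2]"
    using cong_closure_isolated[OF isolated_w] by fastforce
  with equiv_1 equiv_2 equiv_3 equiv_4 equiv_5 show ?thesis by blast
qed

end
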